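(* Let $D\in\mathbb S^d$, $\hat\Sigma\in\mathbb S^d_+$, $\gamma\in\mathbb R_+$ and $$J^\star=\sup_{\Sigma\succeq0}\ \langle D,\Sigma\rangle-\gamma\,\mathrm{Tr}\big[\Sigma-2(\hat\Sigma^{1/2}\Sigma\hat\Sigma^{1/2})^{1/2}\big].$$ Then $J^\star=\gamma^2\langle(\gamma I_d-D)^{-1},\hat\Sigma\rangle$ if $\gamma>\lambda_{\max}(D)$; $J^\star=\liminf_{\bar\gamma\downarrow\gamma}\bar\gamma^2\langle(\bar\gamma I_d-D)^{-1},\hat\Sigma\rangle$ if $\gamma=\lambda_{\max}(D)$; and $J^\star=+\infty$ if $\gamma<\lambda_{\max}(D)$. Moreover, if $\gamma>\lambda_{\max}(D)$, the supremum is attained at $\Sigma^\star=\gamma^2(\gamma I_d-D)^{-1}\hat\Sigma(\gamma I_d-D)^{-1}$, and this maximizer is unique if $\hat\Sigma\succ0$.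
   Context: $\langle A,B\rangle=\mathrm{Tr}[A^\top B]$; $\mathbb S^d$ symmetric matrices, $\mathbb S^d_+$ positive semidefinite ones; $\lambda_{\max}$ the largest eigenvalue; $A^{1/2}$ the positive semidefinite square root. *)

theory Defs
  imports "HOL-Analysis.Analysis" "HOL-Library.Extended_Real"
begin

definition symmetric_mat :: "real^'n^'n \<Rightarrow> bool" where
  "symmetric_mat A \<longleftrightarrow> transpose A = A"

definition psd :: "real^'n^'n \<Rightarrow> bool" where
  "psd A \<longleftrightarrow> symmetric_mat A \<and> (\<forall>x. 0 \<le> x \<bullet> (A *v x))"

definition pd :: "real^'n^'n \<Rightarrow> bool" where
  "pd A \<longleftrightarrow> symmetric_mat A \<and> (\<forall>x. x \<noteq> 0 \<longrightarrow> 0 < x \<bullet> (A *v x))"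

definition frob_inner :: "real^'n^'n \<Rightarrow> real^'n^'n \<Rightarrow> real" where
  "frob_inner A B = trace (transpose A ** B)"

definition psd_sqrt :: "real^'n^'n \<Rightarrow> real^'n^'n" where
  "psd_sqrt A = (THE B. psd B \<and> B ** B = A)"

definition eigenvalues :: "real^'n^'n \<Rightarrow> real set" where
  "eigenvalues A = {l. \<exists>v. v \<noteq> 0 \<and> A *v v = l *\<^sub>R v}"

definition lambda_max :: "real^'n^'n \<Rightarrow> real" where
  "lambda_max A = Max (eigenvalues A)"

definition objective :: "real^'n^'n \<Rightarrow> real^'n^'n \<Rightarrow> real \<Rightarrow> real^'n^'n \<Rightarrow> real" where
  "objective D Shat \<gamma> S =
     frob_inner D S
     - \<gamma> * trace (S - 2 *\<^sub>R psd_sqrt (psd_sqrt Shat ** S ** psd_sqrt Shat))"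

definition Jstar :: "real^'n^'n \<Rightarrow> real^'n^'n \<Rightarrow> real \<Rightarrow> ereal" where
  "Jstar D Shat \<gamma> = (SUP S\<in>{S. psd S}. ereal (objective D Shat \<gamma> S))"

definition closed_form :: "real^'n^'n \<Rightarrow> real^'n^'n \<Rightarrow> real \<Rightarrow> real" where
  "closed_form D Shat g = g\<^sup>2 * frob_inner (matrix_inv (g *\<^sub>R mat 1 - D)) Shat"

end

theory Submission
  imports Defs
begin

text \<open>Write \<open>R = Shat\<^sup>1\<^sup>/\<^sup>2\<close> and \<open>A = \<gamma> I - D\<close>. The objective at \<open>S\<close> equals
  \<open>2\<gamma> Tr (R S R)\<^sup>1\<^sup>/\<^sup>2 - Tr (A S)\<close>. If \<open>\<gamma> > \<lambda>\<^sub>m\<^sub>a\<^sub>x(D)\<close> then \<open>A\<close> is positive definite, and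
  diagonalising \<open>(R S R)\<^sup>1\<^sup>/\<^sup>2\<close> turns its trace into a sum of inner products
  \<open>\<langle>S\<^sup>1\<^sup>/\<^sup>2 y\<^sub>i, R v\<^sub>i\<rangle>\<close> over two orthonormal families; completing the square against \<open>A\<close> in each
  term gives the bound \<open>\<gamma>\<^sup>2 Tr (A\<^sup>-\<^sup>1 Shat)\<close>, attained at \<open>S\<^sup>\<star>\<close>. The gap to the bound is
  \<open>Tr (N A N\<^sup>T)\<close> for an explicit \<open>N\<close>, which forces uniqueness when \<open>Shat\<close> is invertible.
  If \<open>\<gamma> < \<lambda>\<^sub>m\<^sub>a\<^sub>x(D)\<close>, scaling a rank-one matrix along a top eigenvector makes the objective
  unbounded. At \<open>\<gamma> = \<lambda>\<^sub>m\<^sub>a\<^sub>x(D)\<close> the objective is affine in \<open>\<gamma>\<close>, so it is bounded by the closed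
  form at \<open>\<gamma>' \<down> \<gamma>\<close>; conversely either a top eigenvector is charged by \<open>Shat\<close> (and the value
  is infinite) or the closed form has a finite limit, approached by the values at \<open>\<gamma>\<close> of the
  maximisers for \<open>\<gamma>' \<down> \<gamma>\<close>.\<close>

section \<open>Symmetric matrices and the spectral theorem\<close>

lemma inner_matrix_vector_transpose:
  "x \<bullet> ((A::real^'n^'m) *v y) = (transpose A *v x) \<bullet> y"
  by (simp add: dot_lmul_matrix)

lemma symmetric_mat_inner_swap:
  fixes A :: "real^'n^'n"
  assumes "symmetric_mat A"
  shows "x \<bullet> (A *v y) = (A *v x) \<bullet> y"
  using assms by (simp add: inner_matrix_vector_transpose symmetric_mat_def)

lemma symmetric_matI:
  fixes M :: "real^'n^'n"
  assumes "\<And>x y. x \<bullet> (M *v y) = (M *v x) \<bullet> y"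
  shows "symmetric_mat M"
proof -
  have "transpose M *v x = M *v x" for x
    using assms inner_matrix_vector_transpose vector_eq_rdot by metis
  then show ?thesis unfolding symmetric_mat_def by (simp add: matrix_eq)
qed

lemma matrix_vector_mul_assoc3: "(A ** B ** C) *v x = A *v (B *v (C *v (x::real^'n)))"
  by (simp add: matrix_vector_mul_assoc matrix_mul_assoc)

lemma transpose_diff: "transpose ((A::real^'n^'m) - B) = transpose A - transpose B"
  by (simp add: transpose_def vec_eq_iff)

lemma trace_scaleR: "trace (c *\<^sub>R (A::real^'n^'n)) = c * trace A"
  by (simp add: trace_def sum_distrib_left)

lemma trace_transpose: "trace (transpose (A::real^'n^'n)) = trace A"
  by (simp add: trace_def transpose_def)

lemma trace_mult_cycle: "trace ((A::real^'n^'n) ** B ** C) = trace (C ** A ** B)"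
  by (metis matrix_mul_assoc trace_mul_sym)

lemma matrix_diff_mult: "((A::real^'n^'m) - B) ** C = A ** C - B ** C"
  by (simp add: matrix_matrix_mult_def vec_eq_iff sum_subtractf algebra_simps)

lemma trace_congruence: "R ** R = Shat \<Longrightarrow> trace (R ** M ** R) = trace (M ** (Shat::real^'n^'n))"
  using trace_mult_cycle[of R M R] trace_mul_sym[of Shat M] by (simp add: matrix_mul_assoc)

lemma linear_coeff_eq_0_if_quadratic_nonpos:
  fixes c d :: real
  assumes "\<And>t. 2 * t * c + t^2 * d \<le> 0"
  shows "c = 0"
proof (rule ccontr)
  assume "c \<noteq> 0"
  define e where "e = \<bar>d\<bar> + 1"
  have pos: "e > 0" "2 * e + d > 0" by (auto simp: e_def abs_if)
  have "2 * (c/e) * c + (c/e)^2 * d = (c/e)^2 * (2 * e + d)"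
    using pos by (simp add: field_simps power2_eq_square)
  moreover have "(c/e)^2 * (2 * e + d) > 0"
    using \<open>c \<noteq> 0\<close> pos by (intro mult_pos_pos) auto
  ultimately show False using assms[of "c/e"] by simp
qed

text \<open>Perturbing the maximiser \<open>v\<close> along a direction \<open>w \<in> V\<close> orthogonal to it cannot increase
  the form, which forces \<open>\<langle>w, A v\<rangle> = 0\<close>.\<close>

lemma quadratic_form_max_is_eigenvector:
  fixes A :: "real^'n^'n"
  assumes sym: "symmetric_mat A" and V: "subspace V" and inv: "\<And>x. x \<in> V \<Longrightarrow> A *v x \<in> V"
    and vV: "v \<in> V" and nv: "norm v = 1"
    and mx: "\<And>x. x \<in> V \<Longrightarrow> norm x = 1 \<Longrightarrow> x \<bullet> (A *v x) \<le> v \<bullet> (A *v v)"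
  shows "A *v v = (v \<bullet> (A *v v)) *\<^sub>R v"
proof -
  define l where "l = v \<bullet> (A *v v)"
  have le: "x \<bullet> (A *v x) \<le> l * (x \<bullet> x)" if "x \<in> V" for x
  proof (cases "x = 0")
    case False
    let ?y = "(1 / norm x) *\<^sub>R x"
    have "?y \<in> V" "norm ?y = 1" using V that False by (simp_all add: subspace_scale)
    then have "?y \<bullet> (A *v ?y) \<le> l" using mx l_def by blast
    moreover have "?y \<bullet> (A *v ?y) = (x \<bullet> (A *v x)) / (norm x)^2"
      by (simp add: matrix_vector_mult_scaleR inner_scaleR_left inner_scaleR_right power2_eq_square)
    ultimately have "x \<bullet> (A *v x) / (norm x)^2 \<le> l" by simp
    then show ?thesis using False by (simp add: divide_le_eq power2_norm_eq_inner)
  qed simp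
  have orth: "w \<bullet> (A *v v) = 0" if wV: "w \<in> V" and wv: "w \<bullet> v = 0" for w
  proof -
    define c where "c = w \<bullet> (A *v v)"
    define d where "d = w \<bullet> (A *v w) - l * (w \<bullet> w)"
    have perturb: "2 * t * c + t^2 * d \<le> 0" for t
    proof -
      have "v + t *\<^sub>R w \<in> V" using V vV wV by (simp add: subspace_add subspace_scale)
      then have h: "(v + t *\<^sub>R w) \<bullet> (A *v (v + t *\<^sub>R w)) \<le> l * ((v + t *\<^sub>R w) \<bullet> (v + t *\<^sub>R w))"
        by (rule le)
      have vv: "v \<bullet> v = 1" using nv by (simp add: norm_eq_1)
      have s: "v \<bullet> (A *v w) = c"
        using symmetric_mat_inner_swap[OF sym, of v w] c_def by (simp add: inner_commute)
      have "(v + t *\<^sub>R w) \<bullet> (A *v (v + t *\<^sub>R w)) = l + 2 * t * c + t^2 * (w \<bullet> (A *v w))"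
        using s by (simp add: matrix_vector_right_distrib matrix_vector_mult_scaleR inner_add_left
            inner_add_right l_def c_def power2_eq_square algebra_simps)
      moreover have "(v + t *\<^sub>R w) \<bullet> (v + t *\<^sub>R w) = 1 + t^2 * (w \<bullet> w)"
        using vv wv by (simp add: inner_add_left inner_add_right inner_commute power2_eq_square)
      ultimately show ?thesis using h by (simp add: d_def algebra_simps)
    qed
    show ?thesis using linear_coeff_eq_0_if_quadratic_nonpos[OF perturb] by (simp add: c_def)
  qed
  define u where "u = A *v v - l *\<^sub>R v"
  have uV: "u \<in> V" using V vV inv by (simp add: u_def subspace_diff subspace_scale)
  have uv: "u \<bullet> v = 0"
    using nv by (simp add: u_def l_def inner_diff_left inner_diff_right inner_commute norm_eq_1)
  have "u \<bullet> u = 0" using orth[OF uV uv] uv by (simp add: u_def inner_diff_right)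
  then show ?thesis by (simp add: u_def l_def)
qed

lemma invariant_subspace_unit_eigenvector:
  fixes A :: "real^'n^'n"
  assumes sym: "symmetric_mat A" and V: "subspace V" and inv: "\<And>x. x \<in> V \<Longrightarrow> A *v x \<in> V"
    and nontriv: "V \<noteq> {0}"
  obtains v where "v \<in> V" "norm v = 1" "A *v v = (v \<bullet> (A *v v)) *\<^sub>R v"
proof -
  obtain x where xV: "x \<in> V" and x0: "x \<noteq> 0"
    using nontriv V subspace_0 by blast
  let ?S = "V \<inter> sphere 0 1"
  have "(1 / norm x) *\<^sub>R x \<in> ?S" using xV x0 V by (simp add: subspace_scale)
  then have Sne: "?S \<noteq> {}" by blast
  have Sc: "compact ?S"
    by (metis Int_commute V closed_subspace compact_Int_closed compact_sphere)
  have cont: "continuous_on ?S (\<lambda>x. x \<bullet> (A *v x))"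
    by (intro continuous_intros linear_continuous_on linear_linear[THEN iffD1] matrix_vector_mul_linear)
  obtain v where vS: "v \<in> ?S" and vmax: "\<forall>y\<in>?S. y \<bullet> (A *v y) \<le> v \<bullet> (A *v v)"
    using continuous_attains_sup[OF Sc Sne cont] by blast
  then have vV: "v \<in> V" and nv: "norm v = 1" by auto
  have "A *v v = (v \<bullet> (A *v v)) *\<^sub>R v"
    by (rule quadratic_form_max_is_eigenvector[OF sym V inv vV nv]) (use vmax in auto)
  then show ?thesis using vV nv that by blast
qed

definition orthonormal_basis :: "(real^'n) set \<Rightarrow> bool" where
  "orthonormal_basis B \<longleftrightarrow> pairwise orthogonal B \<and> (\<forall>v\<in>B. norm v = 1) \<and> span B = UNIV"

lemma invariant_subspace_orthonormal_eigenbasis: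
  fixes A :: "real^'n^'n"
  assumes sym: "symmetric_mat A"
  shows "subspace V \<Longrightarrow> (\<And>x. x \<in> V \<Longrightarrow> A *v x \<in> V) \<Longrightarrow>
    \<exists>B. pairwise orthogonal B \<and> (\<forall>v\<in>B. norm v = 1) \<and> B \<subseteq> V \<and> span B = V
        \<and> (\<forall>v\<in>B. \<exists>l. A *v v = l *\<^sub>R v)"
proof (induction "dim V" arbitrary: V rule: less_induct)
  case less
  note V = less.prems(1) and inv = less.prems(2)
  show ?case
  proof (cases "V = {0}")
    case True
    then show ?thesis by (rule_tac x="{}" in exI) auto
  next
    case False
    obtain v where vV: "v \<in> V" and nv: "norm v = 1" and ev: "A *v v = (v \<bullet> (A *v v)) *\<^sub>R v"
      using invariant_subspace_unit_eigenvector[OF sym V inv False] by blast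
    define V' where "V' = V \<inter> {y. y \<bullet> v = 0}"
    have V'sub: "subspace V'" unfolding V'_def by (intro subspace_inter V subspace_hyperplane2)
    have V'inv: "A *v y \<in> V'" if "y \<in> V'" for y
    proof -
      have "(A *v y) \<bullet> v = y \<bullet> (A *v v)" using symmetric_mat_inner_swap[OF sym, of y v] by simp
      also have "\<dots> = 0" using that by (subst ev) (simp add: V'_def)
      finally show ?thesis using that inv by (simp add: V'_def)
    qed
    have "v \<notin> V'" using nv by (auto simp: V'_def)
    then have "V' \<subset> V" using vV unfolding V'_def by blast
    then have "dim V' < dim V" using V V'sub by (metis dim_psubset span_eq_iff)
    from less.hyps[OF this V'sub V'inv]
    obtain B' where B': "pairwise orthogonal B'" "\<forall>v\<in>B'. norm v = 1" "B' \<subseteq> V'" "span B' = V'"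
        "\<forall>v\<in>B'. \<exists>l. A *v v = l *\<^sub>R v" by blast
    show ?thesis
    proof (rule exI[of _ "insert v B'"], intro conjI)
      show "pairwise orthogonal (insert v B')"
        using B'(1,3) by (intro pairwise_orthogonal_insert) (auto simp: V'_def orthogonal_def inner_commute)
      show "\<forall>v\<in>insert v B'. norm v = 1" using B'(2) nv by auto
      show "insert v B' \<subseteq> V" using B'(3) vV by (auto simp: V'_def)
      then have "span (insert v B') \<subseteq> V" using V by (simp add: span_minimal)
      moreover have "V \<subseteq> span (insert v B')"
      proof
        fix y assume yV: "y \<in> V"
        have "y - (y \<bullet> v) *\<^sub>R v \<in> V'"
          using yV vV V nv by (auto simp: V'_def subspace_diff subspace_scale inner_diff_left norm_eq_1)
        then show "y \<in> span (insert v B')" using B'(4) span_breakdown_eq by blast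
      qed
      ultimately show "span (insert v B') = V" by blast
      show "\<forall>w\<in>insert v B'. \<exists>l. A *v w = l *\<^sub>R w" using B'(5) ev by blast
    qed
  qed
qed

lemma symmetric_mat_spectral:
  fixes A :: "real^'n^'n"
  assumes "symmetric_mat A"
  obtains B l where "orthonormal_basis B" "\<And>v. v \<in> B \<Longrightarrow> A *v v = l v *\<^sub>R v"
proof -
  obtain B where "orthonormal_basis B" "\<forall>v\<in>B. \<exists>l. A *v v = l *\<^sub>R v"
    using invariant_subspace_orthonormal_eigenbasis[OF assms, of UNIV]
    by (auto simp: orthonormal_basis_def)
  then show ?thesis using that by metis
qed

lemma orthonormal_basis_exists: "\<exists>B::(real^'n) set. orthonormal_basis B"
proof -
  have "symmetric_mat (0::real^'n^'n)" by (simp add: symmetric_mat_def transpose_def vec_eq_iff)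
  then show ?thesis using symmetric_mat_spectral by metis
qed

lemma orthonormal_basis_finite: "orthonormal_basis B \<Longrightarrow> finite B"
  unfolding orthonormal_basis_def using pairwise_orthogonal_imp_finite by blast

lemma orthonormal_basis_nonzero: "orthonormal_basis B \<Longrightarrow> v \<in> B \<Longrightarrow> v \<noteq> 0"
  unfolding orthonormal_basis_def by auto

lemma orthonormal_basis_nonempty: "orthonormal_basis (B::(real^'n) set) \<Longrightarrow> B \<noteq> {}"
proof
  assume "orthonormal_basis B" "B = {}"
  then have "(UNIV::(real^'n) set) = {0}" by (simp add: orthonormal_basis_def)
  moreover have "axis undefined (1::real) \<noteq> (0::real^'n)" by (simp add: axis_eq_0_iff)
  ultimately show False by auto
qed

lemma orthonormal_basis_inner:
  "orthonormal_basis B \<Longrightarrow> v \<in> B \<Longrightarrow> w \<in> B \<Longrightarrow> v \<bullet> w = (if v = w then 1 else 0)"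
  unfolding orthonormal_basis_def pairwise_def orthogonal_def by (auto simp: norm_eq_1)

lemma orthonormal_basis_parseval:
  assumes B: "orthonormal_basis B"
  shows "x \<bullet> y = (\<Sum>v\<in>B. (x \<bullet> v) * (y \<bullet> v))"
proof -
  have "x = (\<Sum>v\<in>B. (x \<bullet> v) *\<^sub>R v)"
    using B orthonormal_basis_finite[OF B] unfolding orthonormal_basis_def
    by (intro orthonormal_basis_expand[symmetric]) auto
  then have "x \<bullet> y = (\<Sum>v\<in>B. (x \<bullet> v) *\<^sub>R v) \<bullet> y" by simp
  also have "\<dots> = (\<Sum>v\<in>B. (x \<bullet> v) * (v \<bullet> y))"
    by (simp add: inner_sum_left)
  finally show ?thesis by (simp add: inner_commute)
qed

lemma trace_orthonormal_basis:
  assumes B: "orthonormal_basis B"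
  shows "trace (M::real^'n^'n) = (\<Sum>v\<in>B. v \<bullet> (M *v v))"
proof -
  have "trace M = (\<Sum>i\<in>UNIV. axis i 1 \<bullet> (M *v axis i 1))"
    unfolding trace_def by (simp add: inner_axis' matrix_vector_mult_basis column_def)
  also have "\<dots> = (\<Sum>i\<in>UNIV. \<Sum>v\<in>B. (axis i 1 \<bullet> v) * ((M *v axis i 1) \<bullet> v))"
    by (rule sum.cong[OF refl], rule orthonormal_basis_parseval[OF B])
  also have "\<dots> = (\<Sum>v\<in>B. \<Sum>i\<in>UNIV. (axis i 1 \<bullet> v) * ((M *v axis i 1) \<bullet> v))"
    by (rule sum.swap)
  also have "\<dots> = (\<Sum>v\<in>B. v \<bullet> (M *v v))"
  proof (rule sum.cong[OF refl])
    fix v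
    have "(M *v axis i 1) \<bullet> v = (transpose M *v v) $ i" for i
      using inner_matrix_vector_transpose[of v M "axis i 1"] by (simp add: inner_commute inner_axis')
    then have "(\<Sum>i\<in>UNIV. (axis i 1 \<bullet> v) * ((M *v axis i 1) \<bullet> v))
        = (\<Sum>i\<in>UNIV. v $ i * (transpose M *v v) $ i)"
      by (intro sum.cong) (auto simp: inner_axis')
    also have "\<dots> = v \<bullet> (transpose M *v v)" by (simp only: inner_vec_def inner_real_def)
    also have "\<dots> = v \<bullet> (M *v v)"
      using inner_matrix_vector_transpose[of v "transpose M" v] by (simp add: inner_commute)
    finally show "(\<Sum>i\<in>UNIV. (axis i 1 \<bullet> v) * ((M *v axis i 1) \<bullet> v)) = v \<bullet> (M *v v)" .
  qed
  finally show ?thesis .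
qed

lemma matrix_eq_on_orthonormal_basis:
  assumes B: "orthonormal_basis B" and eq: "\<And>v. v \<in> B \<Longrightarrow> (M::real^'n^'n) *v v = N *v v"
  shows "M = N"
proof -
  have "B \<subseteq> {x. (M - N) *v x = 0}" using eq by (auto simp: matrix_vector_mult_diff_rdistrib)
  moreover have "subspace {x. (M - N) *v x = 0}"
    by (simp add: subspace_def matrix_vector_right_distrib matrix_vector_mult_scaleR)
  ultimately have "span B \<subseteq> {x. (M - N) *v x = 0}" using span_minimal by blast
  then show ?thesis using B by (auto simp: orthonormal_basis_def matrix_eq matrix_vector_mult_diff_rdistrib)
qed

lemma quadratic_form_eigen_expansion:
  assumes S: "symmetric_mat D" and B: "orthonormal_basis B"
    and E: "\<And>v. v \<in> B \<Longrightarrow> D *v v = l v *\<^sub>R v"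
  shows "x \<bullet> (D *v x) = (\<Sum>v\<in>B. l v * (x \<bullet> v)^2)"
proof -
  have "x \<bullet> (D *v x) = (\<Sum>v\<in>B. (x \<bullet> v) * ((D *v x) \<bullet> v))"
    by (rule orthonormal_basis_parseval[OF B])
  also have "\<dots> = (\<Sum>v\<in>B. l v * (x \<bullet> v)^2)"
  proof (rule sum.cong[OF refl])
    fix v assume "v \<in> B"
    then have "(D *v x) \<bullet> v = l v * (x \<bullet> v)"
      using symmetric_mat_inner_swap[OF S, of x v] E by simp
    then show "(x \<bullet> v) * ((D *v x) \<bullet> v) = l v * (x \<bullet> v)^2" by (simp add: power2_eq_square)
  qed
  finally show ?thesis .
qed

lemma eigenvalues_orthonormal_eigenbasis:
  assumes S: "symmetric_mat D" and B: "orthonormal_basis B"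
    and E: "\<And>v. v \<in> B \<Longrightarrow> D *v v = l v *\<^sub>R v"
  shows "eigenvalues D = l ` B"
proof
  show "l ` B \<subseteq> eigenvalues D"
  proof
    fix m assume "m \<in> l ` B"
    then obtain v where "v \<in> B" "m = l v" by auto
    then show "m \<in> eigenvalues D"
      using E orthonormal_basis_nonzero[OF B] unfolding eigenvalues_def by auto
  qed
  show "eigenvalues D \<subseteq> l ` B"
  proof
    fix m assume "m \<in> eigenvalues D"
    then obtain w where w: "w \<noteq> 0" "D *v w = m *\<^sub>R w" unfolding eigenvalues_def by blast
    have "\<exists>v\<in>B. w \<bullet> v \<noteq> 0"
    proof (rule ccontr)
      assume "\<not> ?thesis"
      then have "w \<bullet> w = 0" using orthonormal_basis_parseval[OF B, of w w] by simp
      then show False using w by simp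
    qed
    then obtain v where v: "v \<in> B" "w \<bullet> v \<noteq> 0" by blast
    have "m * (w \<bullet> v) = w \<bullet> (D *v v)"
      using w symmetric_mat_inner_swap[OF S, of w v] by simp
    also have "\<dots> = l v * (w \<bullet> v)" using E[OF v(1)] by simp
    finally show "m \<in> l ` B" using v by auto
  qed
qed

lemma lambda_max_orthonormal_eigenbasis:
  assumes S: "symmetric_mat D" and B: "orthonormal_basis B"
    and E: "\<And>v. v \<in> B \<Longrightarrow> D *v v = l v *\<^sub>R v"
  shows "\<exists>u\<in>B. l u = lambda_max D" and "\<And>v. v \<in> B \<Longrightarrow> l v \<le> lambda_max D"
proof -
  have lm: "lambda_max D = Max (l ` B)"
    using eigenvalues_orthonormal_eigenbasis[OF S B E] by (simp add: lambda_max_def)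
  have fin: "finite (l ` B)" and ne: "l ` B \<noteq> {}"
    using orthonormal_basis_finite[OF B] orthonormal_basis_nonempty[OF B] by auto
  show "\<exists>u\<in>B. l u = lambda_max D" using Max_in[OF fin ne] lm by auto
  show "\<And>v. v \<in> B \<Longrightarrow> l v \<le> lambda_max D" using Max_ge[OF fin] lm by auto
qed

lemma quadratic_form_le_lambda_max:
  assumes S: "symmetric_mat D"
  shows "x \<bullet> (D *v x) \<le> lambda_max D * (x \<bullet> x)"
proof -
  obtain B l where B: "orthonormal_basis B" and E: "\<And>v. v \<in> B \<Longrightarrow> D *v v = l v *\<^sub>R v"
    using symmetric_mat_spectral[OF S] by metis
  have "x \<bullet> (D *v x) = (\<Sum>v\<in>B. l v * (x \<bullet> v)^2)" by (rule quadratic_form_eigen_expansion[OF S B E])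
  also have "\<dots> \<le> (\<Sum>v\<in>B. lambda_max D * (x \<bullet> v)^2)"
    using lambda_max_orthonormal_eigenbasis(2)[OF S B E] by (intro sum_mono mult_right_mono) auto
  also have "\<dots> = lambda_max D * (x \<bullet> x)"
    by (simp add: orthonormal_basis_parseval[OF B, of x x] sum_distrib_left power2_eq_square)
  finally show ?thesis .
qed

section \<open>Positive semidefinite matrices and square roots\<close>

definition spectral_sum :: "(real^'n) set \<Rightarrow> (real^'n \<Rightarrow> real) \<Rightarrow> real^'n^'n" where
  "spectral_sum B c = (\<chi> i j. \<Sum>v\<in>B. c v * v$i * v$j)"

lemma spectral_sum_mult_vector: "spectral_sum B c *v x = (\<Sum>v\<in>B. (c v * (v \<bullet> x)) *\<^sub>R v)"
proof -
  have "(spectral_sum B c *v x) $ i = (\<Sum>v\<in>B. (c v * (v \<bullet> x)) *\<^sub>R v) $ i" for i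
  proof -
    have "(spectral_sum B c *v x) $ i = (\<Sum>j\<in>UNIV. \<Sum>v\<in>B. c v * v$i * v$j * x$j)"
      unfolding spectral_sum_def matrix_vector_mult_def by (simp add: sum_distrib_right)
    also have "\<dots> = (\<Sum>v\<in>B. \<Sum>j\<in>UNIV. c v * v$i * v$j * x$j)" by (rule sum.swap)
    also have "\<dots> = (\<Sum>v\<in>B. (c v * (v \<bullet> x)) *\<^sub>R v) $ i"
      by (simp add: inner_vec_def sum_distrib_left sum_component mult_ac)
    finally show ?thesis .
  qed
  then show ?thesis by (simp add: vec_eq_iff)
qed

lemma inner_spectral_sum: "x \<bullet> (spectral_sum B c *v y) = (\<Sum>v\<in>B. c v * (v \<bullet> x) * (v \<bullet> y))"
  by (simp add: spectral_sum_mult_vector inner_sum_right inner_commute mult_ac)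

lemma symmetric_spectral_sum: "symmetric_mat (spectral_sum B c)"
  by (rule symmetric_matI) (simp add: inner_spectral_sum inner_commute mult_ac)

lemma spectral_sum_eigenvector:
  assumes B: "orthonormal_basis B" and w: "w \<in> B"
  shows "spectral_sum B c *v w = c w *\<^sub>R w"
proof -
  have "spectral_sum B c *v w = (\<Sum>v\<in>B. if v = w then c w *\<^sub>R w else 0)"
    unfolding spectral_sum_mult_vector
    by (rule sum.cong) (auto simp: orthonormal_basis_inner[OF B _ w])
  also have "\<dots> = c w *\<^sub>R w" using orthonormal_basis_finite[OF B] w by simp
  finally show ?thesis .
qed

lemma trace_mult_rank_one:
  "trace ((P::real^'n^'n) ** spectral_sum {u} (\<lambda>_. t)) = t * (u \<bullet> (P *v u))"
proof -
  obtain B :: "(real^'n) set" where B: "orthonormal_basis B" using orthonormal_basis_exists by blast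
  have "trace (P ** spectral_sum {u} (\<lambda>_. t))
      = (\<Sum>v\<in>B. t * ((u \<bullet> v) * ((P *v u) \<bullet> v)))"
    by (simp add: trace_orthonormal_basis[OF B] matrix_vector_mul_assoc[symmetric]
        spectral_sum_mult_vector matrix_vector_mult_scaleR inner_commute mult.assoc)
  also have "\<dots> = t * (u \<bullet> (P *v u))"
    by (simp add: sum_distrib_left[symmetric] orthonormal_basis_parseval[OF B, symmetric])
  finally show ?thesis .
qed

lemma psd_symmetric: "psd A \<Longrightarrow> symmetric_mat A"
  by (simp add: psd_def)

lemma psd_quadratic_form: "psd A \<Longrightarrow> 0 \<le> x \<bullet> (A *v x)"
  by (simp add: psd_def)

lemma psd_zero: "psd (0::real^'n^'n)"
  by (simp add: psd_def symmetric_mat_def transpose_def vec_eq_iff)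

lemma psd_rank_one: "t \<ge> 0 \<Longrightarrow> psd (spectral_sum {u} (\<lambda>_. t))"
  unfolding psd_def by (simp add: symmetric_spectral_sum inner_spectral_sum mult.assoc)

lemma psd_spectral:
  assumes "psd A"
  obtains B l where "orthonormal_basis B" "\<And>v. v \<in> B \<Longrightarrow> A *v v = l v *\<^sub>R v"
    "\<And>v. v \<in> B \<Longrightarrow> l v \<ge> 0"
proof -
  obtain B l where B: "orthonormal_basis B" and E: "\<And>v. v \<in> B \<Longrightarrow> A *v v = l v *\<^sub>R v"
    using symmetric_mat_spectral[OF psd_symmetric[OF assms]] by metis
  have "l v \<ge> 0" if "v \<in> B" for v
    using psd_quadratic_form[OF assms, of v] E[OF that] orthonormal_basis_inner[OF B that that]
    by simp
  then show ?thesis using B E that by blast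
qed

lemma psd_trace_nonneg:
  assumes "psd (A::real^'n^'n)"
  shows "trace A \<ge> 0"
  unfolding trace_def
proof (rule sum_nonneg)
  fix i
  have "A $ i $ i = axis i 1 \<bullet> (A *v axis i 1)"
    by (simp add: inner_axis' matrix_vector_mult_basis column_def)
  then show "A $ i $ i \<ge> 0" using psd_quadratic_form[OF assms] by simp
qed

lemma psd_scaleR:
  assumes "psd P" and "c \<ge> 0"
  shows "psd (c *\<^sub>R P)"
  using assms
  by (simp add: psd_def symmetric_mat_def transpose_scalar scaleR_matrix_vector_assoc[symmetric])

lemma psd_congruence:
  fixes P C :: "real^'n^'n"
  assumes P: "psd P" and C: "symmetric_mat C"
  shows "psd (C ** P ** C)"
proof -
  have form: "x \<bullet> ((C ** P ** C) *v y) = (C *v x) \<bullet> (P *v (C *v y))" for x y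
    unfolding matrix_vector_mul_assoc3 by (rule symmetric_mat_inner_swap[OF C])
  have "symmetric_mat (C ** P ** C)"
  proof (rule symmetric_matI)
    fix x y :: "real^'n"
    have "x \<bullet> ((C ** P ** C) *v y) = (P *v (C *v x)) \<bullet> (C *v y)"
      unfolding form by (rule symmetric_mat_inner_swap[OF psd_symmetric[OF P]])
    also have "\<dots> = ((C ** P ** C) *v x) \<bullet> y"
      using symmetric_mat_inner_swap[OF C, of "P *v (C *v x)" y]
      by (simp add: inner_commute matrix_vector_mul_assoc3)
    finally show "x \<bullet> ((C ** P ** C) *v y) = ((C ** P ** C) *v x) \<bullet> y" .
  qed
  then show ?thesis using psd_quadratic_form[OF P] by (simp add: psd_def form)
qed

lemma psd_sqrt_exists:
  assumes "psd A"
  shows "\<exists>R. psd R \<and> R ** R = A"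
proof -
  obtain B l where B: "orthonormal_basis B" "\<And>v. v \<in> B \<Longrightarrow> A *v v = l v *\<^sub>R v"
    "\<And>v. v \<in> B \<Longrightarrow> l v \<ge> 0"
    using psd_spectral[OF assms] by metis
  define R where "R = spectral_sum B (\<lambda>v. sqrt (l v))"
  have "psd R"
    unfolding psd_def R_def
    by (auto simp: symmetric_spectral_sum inner_spectral_sum B(3) mult.assoc intro!: sum_nonneg)
  moreover have "R ** R = A"
  proof (rule matrix_eq_on_orthonormal_basis[OF B(1)])
    fix v assume v: "v \<in> B"
    have "(R ** R) *v v = (sqrt (l v) * sqrt (l v)) *\<^sub>R v"
      using v B(1)
      by (simp add: R_def matrix_vector_mul_assoc[symmetric] spectral_sum_eigenvector
          matrix_vector_mult_scaleR)
    then show "(R ** R) *v v = A *v v" using B(2,3)[OF v] by simp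
  qed
  ultimately show ?thesis by blast
qed

text \<open>If \<open>C v = c v\<close> with \<open>c \<ge> 0\<close>, then \<open>y = P v - c v\<close> satisfies \<open>P y = -c y\<close>; positivity
  of \<open>P\<close> forces \<open>y = 0\<close>.\<close>

lemma psd_square_eq_imp_eq:
  assumes P: "psd P" and C: "psd C" and eq: "P ** P = C ** C"
  shows "P = C"
proof -
  obtain B l where B: "orthonormal_basis B" "\<And>v. v \<in> B \<Longrightarrow> C *v v = l v *\<^sub>R v"
    "\<And>v. v \<in> B \<Longrightarrow> l v \<ge> 0"
    using psd_spectral[OF C] by metis
  show ?thesis
  proof (rule matrix_eq_on_orthonormal_basis[OF B(1)])
    fix v assume v: "v \<in> B"
    define c where "c = l v"
    have c0: "c \<ge> 0" using B(3)[OF v] c_def by simp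
    have PPv: "P *v (P *v v) = (c * c) *\<^sub>R v"
    proof -
      have "P *v (P *v v) = C *v (C *v v)" using eq by (metis matrix_vector_mul_assoc)
      then show ?thesis using B(2)[OF v] by (simp add: c_def matrix_vector_mult_scaleR)
    qed
    define y where "y = P *v v - c *\<^sub>R v"
    have Py: "P *v y = - c *\<^sub>R y"
      by (simp add: y_def matrix_vector_mult_diff_distrib matrix_vector_mult_scaleR PPv algebra_simps)
    have "y = 0"
    proof (cases "c = 0")
      case True
      have "y \<bullet> y = v \<bullet> (P *v (P *v v))"
        using symmetric_mat_inner_swap[OF psd_symmetric[OF P], of v "P *v v"] True by (simp add: y_def)
      then show ?thesis using PPv True by simp
    next
      case False
      have "0 \<le> y \<bullet> (P *v y)" by (rule psd_quadratic_form[OF P])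
      then have "y \<bullet> y \<le> 0" using False c0 by (simp add: Py mult_le_0_iff)
      then show ?thesis by (metis inner_eq_zero_iff inner_ge_zero order_antisym)
    qed
    then show "P *v v = C *v v" using B(2)[OF v] by (simp add: y_def c_def)
  qed
qed

lemma
  assumes "psd A"
  shows psd_psd_sqrt: "psd (psd_sqrt A)" and psd_sqrt_square: "psd_sqrt A ** psd_sqrt A = A"
proof -
  have "\<exists>!R. psd R \<and> R ** R = A"
    using psd_sqrt_exists[OF assms] psd_square_eq_imp_eq by blast
  then have "psd (psd_sqrt A) \<and> psd_sqrt A ** psd_sqrt A = A"
    unfolding psd_sqrt_def by (rule theI')
  then show "psd (psd_sqrt A)" "psd_sqrt A ** psd_sqrt A = A" by auto
qed

lemma psd_sqrt_unique:
  assumes R: "psd R" and RR: "R ** R = A"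
  shows "psd_sqrt A = R"
proof -
  have "psd A"
  proof -
    have "x \<bullet> (A *v x) = (R *v x) \<bullet> (R *v x)" for x
      using RR symmetric_mat_inner_swap[OF psd_symmetric[OF R], of x "R *v x"]
      by (metis matrix_vector_mul_assoc)
    moreover have "symmetric_mat A"
      using R RR unfolding symmetric_mat_def psd_def by (metis matrix_transpose_mul)
    ultimately show ?thesis by (simp add: psd_def)
  qed
  then show ?thesis
    using psd_square_eq_imp_eq[OF psd_psd_sqrt R] psd_sqrt_square RR by metis
qed

lemma psd_sqrt_rank_one:
  assumes "t \<ge> 0" and "w \<noteq> 0"
  shows "psd_sqrt (spectral_sum {w} (\<lambda>_. t)) = spectral_sum {w} (\<lambda>_. sqrt t / norm w)"
proof -
  define c where "c = sqrt t / norm w"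
  have c: "c \<ge> 0" "t = c * c * (w \<bullet> w)"
    using assms by (simp_all add: c_def dot_square_norm power2_eq_square)
  have "spectral_sum {w} (\<lambda>_. c) ** spectral_sum {w} (\<lambda>_. c) = spectral_sum {w} (\<lambda>_. t)"
    by (simp add: matrix_eq matrix_vector_mul_assoc[symmetric] spectral_sum_mult_vector c(2)
        algebra_simps)
  then show ?thesis unfolding c_def[symmetric] by (intro psd_sqrt_unique psd_rank_one c(1))
qed

lemma congruence_rank_one:
  assumes "symmetric_mat R"
  shows "R ** spectral_sum {v} (\<lambda>_. t) ** R = spectral_sum {R *v v} (\<lambda>_. t)"
  using symmetric_mat_inner_swap[OF assms, of v]
  by (simp add: matrix_eq matrix_vector_mul_assoc3 spectral_sum_mult_vector matrix_vector_mult_scaleR)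

section \<open>Positive definite matrices and inverses\<close>

lemma pd_imp_psd: "pd A \<Longrightarrow> psd A"
  unfolding pd_def psd_def by (metis inner_zero_left less_imp_le order_refl)

lemma invertible_if_kernel_trivial:
  "(\<And>x. (A::real^'n^'n) *v x = 0 \<Longrightarrow> x = 0) \<Longrightarrow> invertible A"
  by (metis matrix_left_invertible_ker invertible_left_inverse)

lemma pd_invertible: "pd (A::real^'n^'n) \<Longrightarrow> invertible A"
  by (rule invertible_if_kernel_trivial) (force simp: pd_def)

lemma
  assumes "invertible (A::real^'n^'n)"
  shows matrix_inv_right: "A ** matrix_inv A = mat 1"
    and matrix_inv_left: "matrix_inv A ** A = mat 1"
proof -
  have "A ** matrix_inv A = mat 1 \<and> matrix_inv A ** A = mat 1"
    using assms unfolding invertible_def matrix_inv_def by (rule someI_ex)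
  then show "A ** matrix_inv A = mat 1" "matrix_inv A ** A = mat 1" by auto
qed

lemma
  assumes "invertible (A::real^'n^'n)"
  shows matrix_inv_right_vector: "A *v (matrix_inv A *v x) = x"
    and matrix_inv_left_vector: "matrix_inv A *v (A *v x) = x"
  using matrix_inv_right[OF assms] matrix_inv_left[OF assms]
  by (simp_all add: matrix_vector_mul_assoc)

lemma symmetric_matrix_inv:
  assumes S: "symmetric_mat (A::real^'n^'n)" and I: "invertible A"
  shows "symmetric_mat (matrix_inv A)"
proof -
  let ?M = "matrix_inv A"
  have "transpose ?M ** A = mat 1"
    using matrix_inv_right[OF I] S unfolding symmetric_mat_def
    by (metis matrix_transpose_mul transpose_mat)
  then have "transpose ?M = ?M"
    using matrix_inv_right[OF I] by (metis matrix_mul_assoc matrix_mul_lid matrix_mul_rid)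
  then show ?thesis by (simp add: symmetric_mat_def)
qed

lemma psd_matrix_inv_pd:
  assumes P: "pd (A::real^'n^'n)"
  shows "psd (matrix_inv A)"
proof -
  have I: "invertible A" by (rule pd_invertible[OF P])
  have "0 \<le> x \<bullet> (matrix_inv A *v x)" for x
    using psd_quadratic_form[OF pd_imp_psd[OF P], of "matrix_inv A *v x"]
    by (simp add: matrix_inv_right_vector[OF I] inner_commute)
  then show ?thesis
    using symmetric_matrix_inv[OF _ I] P by (simp add: psd_def pd_def)
qed

text \<open>\<open>Tr (N A N\<^sup>T) = \<Sum>\<^sub>v a\<^sub>v |N v|\<^sup>2\<close> over an eigenbasis of \<open>A\<close>.\<close>

lemma pd_trace_congruence_eq_0:
  fixes N A :: "real^'n^'n"
  assumes A: "pd A" and t: "trace (N ** A ** transpose N) = 0"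
  shows "N = 0"
proof -
  obtain B a where B: "orthonormal_basis B" "\<And>v. v \<in> B \<Longrightarrow> A *v v = a v *\<^sub>R v"
    using symmetric_mat_spectral[OF psd_symmetric[OF pd_imp_psd[OF A]]] by metis
  have apos: "a v > 0" if "v \<in> B" for v
    using A orthonormal_basis_nonzero[OF B(1) that] B(2)[OF that]
      orthonormal_basis_inner[OF B(1) that that] unfolding pd_def by force
  have "trace (N ** A ** transpose N) = (\<Sum>v\<in>B. v \<bullet> ((transpose N ** N ** A) *v v))"
    by (subst trace_mult_cycle) (rule trace_orthonormal_basis[OF B(1)])
  also have "\<dots> = (\<Sum>v\<in>B. a v * ((N *v v) \<bullet> (N *v v)))"
    using inner_matrix_vector_transpose[of _ "transpose N"]
    by (intro sum.cong) (simp_all add: matrix_vector_mul_assoc3 B(2) matrix_vector_mult_scaleR)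
  finally have "(\<Sum>v\<in>B. a v * ((N *v v) \<bullet> (N *v v))) = 0" using t by simp
  then have "\<forall>v\<in>B. a v * ((N *v v) \<bullet> (N *v v)) = 0"
    using apos orthonormal_basis_finite[OF B(1)]
    by (subst (asm) sum_nonneg_eq_0_iff) (auto simp: less_imp_le)
  then have "N *v v = 0 *v v" if "v \<in> B" for v using apos[OF that] that by auto
  then show ?thesis by (rule matrix_eq_on_orthonormal_basis[OF B(1)])
qed

section \<open>Traces against orthonormal families\<close>

lemma bessel_inequality:
  fixes z :: "'a::real_inner"
  assumes K: "finite K" and orth: "\<And>u v. u \<in> K \<Longrightarrow> v \<in> K \<Longrightarrow> y u \<bullet> y v = (if u = v then 1 else 0)"
  shows "(\<Sum>v\<in>K. (y v \<bullet> z)^2) \<le> z \<bullet> z"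
proof -
  define s where "s = (\<Sum>v\<in>K. (y v \<bullet> z) *\<^sub>R y v)"
  have "y u \<bullet> s = y u \<bullet> z" if "u \<in> K" for u
  proof -
    have "y u \<bullet> s = (\<Sum>v\<in>K. if v = u then y u \<bullet> z else 0)"
      unfolding s_def inner_sum_right by (rule sum.cong) (auto simp: orth[OF that])
    then show ?thesis using K that by simp
  qed
  then have ss: "s \<bullet> s = (\<Sum>v\<in>K. (y v \<bullet> z)^2)"
    by (subst (1) s_def) (simp add: inner_sum_left power2_eq_square cong: sum.cong)
  have zs: "z \<bullet> s = (\<Sum>v\<in>K. (y v \<bullet> z)^2)"
    by (simp add: s_def inner_sum_right power2_eq_square inner_commute)
  have "0 \<le> (z - s) \<bullet> (z - s)" by (rule inner_ge_zero)
  also have "\<dots> = z \<bullet> z - 2 * (z \<bullet> s) + s \<bullet> s"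
    unfolding inner_diff_left inner_diff_right inner_commute[of s z] by linarith
  finally show ?thesis using zs ss by linarith
qed

lemma sum_quadratic_form_orthonormal_le_trace:
  assumes P: "psd P" and K: "finite K"
    and orth: "\<And>u v. u \<in> K \<Longrightarrow> v \<in> K \<Longrightarrow> y u \<bullet> y v = (if u = v then 1 else 0)"
  shows "(\<Sum>v\<in>K. y v \<bullet> (P *v y v)) \<le> trace (P::real^'n^'n)"
proof -
  obtain B p where B: "orthonormal_basis B" "\<And>e. e \<in> B \<Longrightarrow> P *v e = p e *\<^sub>R e"
    "\<And>e. e \<in> B \<Longrightarrow> p e \<ge> 0"
    using psd_spectral[OF P] by metis
  have "(\<Sum>v\<in>K. y v \<bullet> (P *v y v)) = (\<Sum>e\<in>B. p e * (\<Sum>v\<in>K. (y v \<bullet> e)^2))"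
    by (simp add: quadratic_form_eigen_expansion[OF psd_symmetric[OF P] B(1,2)]
        sum_distrib_left sum.swap[of _ K])
  also have "\<dots> \<le> (\<Sum>e\<in>B. p e)"
  proof (rule sum_mono)
    fix e assume e: "e \<in> B"
    have "(\<Sum>v\<in>K. (y v \<bullet> e)^2) \<le> 1"
      using bessel_inequality[OF K orth, of e] orthonormal_basis_inner[OF B(1) e e] by simp
    then show "p e * (\<Sum>v\<in>K. (y v \<bullet> e)^2) \<le> p e"
      using B(3)[OF e] by (simp add: mult_left_le)
  qed
  also have "\<dots> = trace P"
    using B(1,2) by (simp add: trace_orthonormal_basis[OF B(1)] orthonormal_basis_inner)
  finally show ?thesis .
qed

section \<open>The objective\<close>

lemma shifted_mult_vector: "(g *\<^sub>R mat 1 - D) *v x = g *\<^sub>R x - D *v (x::real^'n)"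
  by (simp add: matrix_vector_mult_diff_rdistrib scaleR_matrix_vector_assoc[symmetric])

lemma symmetric_shifted:
  assumes "symmetric_mat (D::real^'n^'n)"
  shows "symmetric_mat (g *\<^sub>R mat 1 - D)"
  using assms by (simp add: symmetric_mat_def transpose_diff transpose_scalar)

lemma pd_shifted:
  assumes S: "symmetric_mat D" and g: "g > lambda_max D"
  shows "pd (g *\<^sub>R mat 1 - D)"
proof -
  have "0 < x \<bullet> ((g *\<^sub>R mat 1 - D) *v x)" if "x \<noteq> 0" for x
  proof -
    have "x \<bullet> ((g *\<^sub>R mat 1 - D) *v x) = g * (x \<bullet> x) - x \<bullet> (D *v x)"
      by (simp add: shifted_mult_vector inner_diff_right)
    moreover have "x \<bullet> (D *v x) \<le> lambda_max D * (x \<bullet> x)" by (rule quadratic_form_le_lambda_max[OF S])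
    moreover have "(g - lambda_max D) * (x \<bullet> x) > 0" using g that by simp
    ultimately show ?thesis by (simp add: algebra_simps)
  qed
  then show ?thesis using symmetric_shifted[OF S] by (simp add: pd_def)
qed

lemma trace_shifted_mult:
  "trace ((g *\<^sub>R mat 1 - D) ** (S::real^'n^'n)) = g * trace S - trace (D ** S)"
  by (simp add: matrix_diff_mult scalar_matrix_assoc[symmetric] trace_sub trace_scaleR)

lemma frob_inner_symmetric: "symmetric_mat A \<Longrightarrow> frob_inner A B = trace (A ** B)"
  by (simp add: frob_inner_def symmetric_mat_def)

abbreviation fidelity :: "real^'n^'n \<Rightarrow> real^'n^'n \<Rightarrow> real" where
  "fidelity Shat S \<equiv> trace (psd_sqrt (psd_sqrt Shat ** S ** psd_sqrt Shat))"

lemma objective_eq: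
  assumes "symmetric_mat D"
  shows "objective D Shat g S = trace (D ** S) - g * trace S + 2 * g * fidelity Shat S"
  unfolding objective_def frob_inner_symmetric[OF assms] trace_sub trace_scaleR
  by (simp add: algebra_simps)

lemma objective_eq_shifted:
  assumes "symmetric_mat D"
  shows "objective D Shat g S = 2 * g * fidelity Shat S - trace ((g *\<^sub>R mat 1 - D) ** S)"
  unfolding objective_eq[OF assms] trace_shifted_mult by simp

lemma objective_change_gamma:
  assumes "symmetric_mat D"
  shows "objective D Shat a S = objective D Shat b S + (b - a) * (trace S - 2 * fidelity Shat S)"
  unfolding objective_eq[OF assms] by (simp add: algebra_simps)

lemma objective_ge_linear:
  assumes D: "symmetric_mat D" and Sh: "psd Shat" and S: "psd S" and g: "g \<ge> 0"
  shows "objective D Shat g S \<ge> trace (D ** S) - g * trace S"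
proof -
  have "psd (psd_sqrt Shat ** S ** psd_sqrt Shat)"
    by (rule psd_congruence[OF S psd_symmetric[OF psd_psd_sqrt[OF Sh]]])
  then have "fidelity Shat S \<ge> 0" by (intro psd_trace_nonneg psd_psd_sqrt)
  then show ?thesis unfolding objective_eq[OF D] using g by simp
qed

lemma closed_form_eq_trace:
  assumes "symmetric_mat D" and "invertible (g *\<^sub>R mat 1 - D)"
  shows "closed_form D Shat g = g^2 * trace (matrix_inv (g *\<^sub>R mat 1 - D) ** Shat)"
  using frob_inner_symmetric[OF symmetric_matrix_inv[OF symmetric_shifted[OF assms(1)] assms(2)]]
  by (simp add: closed_form_def)

lemma objective_le_Jstar: "psd S \<Longrightarrow> ereal (objective D Shat g S) \<le> Jstar D Shat g"
  unfolding Jstar_def by (intro SUP_upper) simp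

lemma Jstar_eq_infinity:
  assumes "\<And>r. \<exists>S. psd S \<and> r \<le> objective D Shat g S"
  shows "Jstar D Shat g = \<infinity>"
proof (rule ereal_top)
  fix r :: real
  obtain S where "psd S" "r \<le> objective D Shat g S" using assms by blast
  then show "ereal r \<le> Jstar D Shat g" using objective_le_Jstar order_trans ereal_less_eq(3) by blast
qed

lemma Jstar_nonneg: "0 \<le> Jstar D Shat g"
proof -
  have "psd_sqrt (psd_sqrt Shat ** 0 ** psd_sqrt Shat) = 0"
    by (simp add: psd_sqrt_unique psd_zero)
  then have "objective D Shat g 0 = 0" by (simp add: objective_def frob_inner_def trace_def)
  then show ?thesis using objective_le_Jstar[OF psd_zero, of D Shat g] by (simp add: zero_ereal_def)
qed

section \<open>The upper bound and its equality case\<close>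

lemma completing_square:
  assumes A: "pd A"
  shows "2 * g * (a \<bullet> b) \<le> a \<bullet> (A *v a) + g^2 * (b \<bullet> (matrix_inv A *v b))"
proof -
  have I: "invertible A" by (rule pd_invertible[OF A])
  define c where "c = matrix_inv A *v b"
  have Ac: "A *v c = b" by (simp add: c_def matrix_inv_right_vector[OF I])
  have "0 \<le> (a - g *\<^sub>R c) \<bullet> (A *v (a - g *\<^sub>R c))" by (rule psd_quadratic_form[OF pd_imp_psd[OF A]])
  also have "\<dots> = a \<bullet> (A *v a) - g * (a \<bullet> b) - g * (c \<bullet> (A *v a)) + g * g * (c \<bullet> b)"
    by (simp add: matrix_vector_mult_diff_distrib matrix_vector_mult_scaleR Ac
        inner_diff_left inner_diff_right algebra_simps)
  also have "c \<bullet> (A *v a) = a \<bullet> b"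
    using symmetric_mat_inner_swap[OF psd_symmetric[OF pd_imp_psd[OF A]], of c a] Ac
    by (simp add: inner_commute)
  finally show ?thesis by (simp add: c_def inner_commute power2_eq_square algebra_simps)
qed

lemma inner_sqrt_congruence_eigenvector:
  fixes R S :: "real^'n^'n"
  assumes S: "psd S" and RS: "symmetric_mat R"
    and Xv: "psd_sqrt (R ** S ** R) *v v = x *\<^sub>R v"
  shows "(psd_sqrt S *v (R *v u)) \<bullet> (psd_sqrt S *v (R *v v)) = x^2 * (u \<bullet> v)"
proof -
  define Q where "Q = psd_sqrt S"
  define X where "X = psd_sqrt (R ** S ** R)"
  have QS: "symmetric_mat Q" and QQ: "Q ** Q = S"
    using psd_psd_sqrt[OF S] psd_sqrt_square[OF S] by (auto simp: Q_def psd_def)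
  have XX: "X ** X = R ** S ** R" unfolding X_def by (rule psd_sqrt_square[OF psd_congruence[OF S RS]])
  have "(Q *v (R *v u)) \<bullet> (Q *v (R *v v)) = (R *v u) \<bullet> (Q *v (Q *v (R *v v)))"
    by (rule symmetric_mat_inner_swap[OF QS, symmetric])
  also have "Q *v (Q *v (R *v v)) = S *v (R *v v)"
    using QQ by (metis matrix_vector_mul_assoc)
  also have "(R *v u) \<bullet> (S *v (R *v v)) = u \<bullet> (R *v (S *v (R *v v)))"
    by (rule symmetric_mat_inner_swap[OF RS, symmetric])
  also have "R *v (S *v (R *v v)) = X *v (X *v v)"
    using XX by (metis matrix_vector_mul_assoc3 matrix_vector_mul_assoc)
  also have "\<dots> = x^2 *\<^sub>R v"
    using Xv by (simp add: X_def matrix_vector_mult_scaleR power2_eq_square)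
  finally show ?thesis by (simp add: Q_def)
qed

text \<open>With \<open>Q = S\<^sup>1\<^sup>/\<^sup>2\<close> and \<open>X = (R S R)\<^sup>1\<^sup>/\<^sup>2\<close> diagonalised by eigenvectors \<open>v\<close> with eigenvalues
  \<open>x\<^sub>v > 0\<close>, the vectors \<open>y\<^sub>v = Q R v / x\<^sub>v\<close> are orthonormal (a polar decomposition of \<open>Q R\<close>),
  and \<open>x\<^sub>v = \<langle>Q y\<^sub>v, R v\<rangle>\<close>.\<close>

lemma trace_sqrt_congruence_polar:
  fixes R S :: "real^'n^'n"
  assumes S: "psd S" and RS: "symmetric_mat R"
  obtains K y where "finite K"
    "\<And>u v. u \<in> K \<Longrightarrow> v \<in> K \<Longrightarrow> u \<bullet> v = (if u = v then 1 else 0)"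
    "\<And>u v. u \<in> K \<Longrightarrow> v \<in> K \<Longrightarrow> y u \<bullet> y v = (if u = v then 1 else 0)"
    "trace (psd_sqrt (R ** S ** R)) = (\<Sum>v\<in>K. (psd_sqrt S *v y v) \<bullet> (R *v v))"
proof -
  define Q where "Q = psd_sqrt S"
  define X where "X = psd_sqrt (R ** S ** R)"
  have QS: "symmetric_mat Q" using psd_psd_sqrt[OF S] by (simp add: Q_def psd_def)
  have T: "psd (R ** S ** R)" by (rule psd_congruence[OF S RS])
  obtain BX x where BX: "orthonormal_basis BX" and Xv: "\<And>v. v \<in> BX \<Longrightarrow> X *v v = x v *\<^sub>R v"
      and x0: "\<And>v. v \<in> BX \<Longrightarrow> x v \<ge> 0"
    using psd_spectral[OF psd_psd_sqrt[OF T]] unfolding X_def by metis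
  have finBX: "finite BX" by (rule orthonormal_basis_finite[OF BX])
  define K where "K = {v\<in>BX. x v > 0}"
  define w where "w v = Q *v (R *v v)" for v
  define y where "y v = (1 / x v) *\<^sub>R w v" for v
  have ww: "w u \<bullet> w v = (x v)^2 * (u \<bullet> v)" if "v \<in> BX" for u v
    unfolding w_def Q_def by (rule inner_sqrt_congruence_eigenvector[OF S RS Xv[OF that, unfolded X_def]])
  show ?thesis
  proof
    show "finite K" using finBX by (simp add: K_def)
    show "u \<bullet> v = (if u = v then 1 else 0)" if "u \<in> K" "v \<in> K" for u v
      using that orthonormal_basis_inner[OF BX] by (simp add: K_def)
    show "y u \<bullet> y v = (if u = v then 1 else 0)" if "u \<in> K" "v \<in> K" for u v
    proof -
      have uv: "u \<in> BX" "v \<in> BX" "x u > 0" "x v > 0" using that by (auto simp: K_def)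
      have "y u \<bullet> y v = (1 / x u) * (1 / x v) * ((x v)^2 * (u \<bullet> v))"
        by (simp add: y_def ww[OF uv(2)])
      then show ?thesis
        using orthonormal_basis_inner[OF BX uv(1,2)] uv(3,4) by (simp add: power2_eq_square)
    qed
    have "x v = (Q *v y v) \<bullet> (R *v v)" if "v \<in> K" for v
    proof -
      have v: "v \<in> BX" "x v > 0" using that by (auto simp: K_def)
      have "(Q *v y v) \<bullet> (R *v v) = y v \<bullet> w v"
        unfolding w_def by (rule symmetric_mat_inner_swap[OF QS, symmetric])
      also have "\<dots> = (1 / x v) * ((x v)^2 * (v \<bullet> v))" by (simp add: y_def ww[OF v(1)])
      also have "\<dots> = x v"
        using orthonormal_basis_inner[OF BX v(1) v(1)] v(2) by (simp add: power2_eq_square)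
      finally show ?thesis by simp
    qed
    moreover have "trace X = (\<Sum>v\<in>K. x v)"
    proof -
      have "trace X = (\<Sum>v\<in>BX. x v)"
        unfolding trace_orthonormal_basis[OF BX]
        by (rule sum.cong[OF refl]) (simp add: Xv orthonormal_basis_inner[OF BX])
      also have "\<dots> = (\<Sum>v\<in>K. x v)"
        using finBX x0 by (intro sum.mono_neutral_right) (auto simp: K_def less_le)
      finally show ?thesis .
    qed
    ultimately show "trace (psd_sqrt (R ** S ** R)) = (\<Sum>v\<in>K. (psd_sqrt S *v y v) \<bullet> (R *v v))"
      by (simp add: X_def Q_def)
  qed
qed

lemma fidelity_le:
  fixes Shat S A :: "real^'n^'n"
  assumes Sh: "psd Shat" and S: "psd S" and A: "pd A"
  shows "2 * g * fidelity Shat S \<le> trace (A ** S) + g^2 * trace (matrix_inv A ** Shat)"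
proof -
  define R where "R = psd_sqrt Shat"
  define Q where "Q = psd_sqrt S"
  define M where "M = matrix_inv A"
  have RS: "symmetric_mat R" and RR: "R ** R = Shat"
    using psd_psd_sqrt[OF Sh] psd_sqrt_square[OF Sh] by (auto simp: R_def psd_def)
  have QS: "symmetric_mat Q" and QQ: "Q ** Q = S"
    using psd_psd_sqrt[OF S] psd_sqrt_square[OF S] by (auto simp: Q_def psd_def)
  obtain K y where K: "finite K" "\<And>u v. u \<in> K \<Longrightarrow> v \<in> K \<Longrightarrow> u \<bullet> v = (if u = v then 1 else 0)"
    and y: "\<And>u v. u \<in> K \<Longrightarrow> v \<in> K \<Longrightarrow> y u \<bullet> y v = (if u = v then 1 else 0)"
    and tr: "trace (psd_sqrt (R ** S ** R)) = (\<Sum>v\<in>K. (Q *v y v) \<bullet> (R *v v))"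
    using trace_sqrt_congruence_polar[OF S RS, folded Q_def] by blast
  have "2 * g * trace (psd_sqrt (R ** S ** R))
      \<le> (\<Sum>v\<in>K. y v \<bullet> ((Q ** A ** Q) *v y v) + g^2 * (v \<bullet> ((R ** M ** R) *v v)))"
    unfolding tr sum_distrib_left
  proof (rule sum_mono)
    fix v
    have "2 * g * ((Q *v y v) \<bullet> (R *v v))
        \<le> (Q *v y v) \<bullet> (A *v (Q *v y v)) + g^2 * ((R *v v) \<bullet> (M *v (R *v v)))"
      unfolding M_def by (rule completing_square[OF A])
    also have "(Q *v y v) \<bullet> (A *v (Q *v y v)) = y v \<bullet> ((Q ** A ** Q) *v y v)"
      unfolding matrix_vector_mul_assoc3 by (rule symmetric_mat_inner_swap[OF QS, symmetric])
    also have "(R *v v) \<bullet> (M *v (R *v v)) = v \<bullet> ((R ** M ** R) *v v)"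
      unfolding matrix_vector_mul_assoc3 by (rule symmetric_mat_inner_swap[OF RS, symmetric])
    finally show "2 * g * ((Q *v y v) \<bullet> (R *v v))
        \<le> y v \<bullet> ((Q ** A ** Q) *v y v) + g^2 * (v \<bullet> ((R ** M ** R) *v v))"
      by (simp add: mult.assoc)
  qed
  also have "\<dots> \<le> trace (Q ** A ** Q) + g^2 * trace (R ** M ** R)"
  proof -
    have "(\<Sum>v\<in>K. y v \<bullet> ((Q ** A ** Q) *v y v)) \<le> trace (Q ** A ** Q)"
      by (rule sum_quadratic_form_orthonormal_le_trace[OF psd_congruence[OF pd_imp_psd[OF A] QS] K(1) y])
    moreover have "(\<Sum>v\<in>K. v \<bullet> ((R ** M ** R) *v v)) \<le> trace (R ** M ** R)"
      using sum_quadratic_form_orthonormal_le_trace[OF psd_congruence[OF psd_matrix_inv_pd[OF A] RS] K]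
      by (simp add: M_def)
    ultimately show ?thesis
      by (simp add: sum.distrib sum_distrib_left[symmetric] add_mono mult_left_mono)
  qed
  also have "\<dots> = trace (A ** S) + g^2 * trace (M ** Shat)"
    using trace_congruence[OF QQ] trace_congruence[OF RR] by simp
  finally show ?thesis by (simp add: M_def R_def)
qed

lemma objective_le_closed_form:
  fixes D Shat S :: "real^'n^'n"
  assumes D: "symmetric_mat D" and Sh: "psd Shat" and S: "psd S" and g: "g > lambda_max D"
  shows "objective D Shat g S \<le> closed_form D Shat g"
proof -
  have A: "pd (g *\<^sub>R mat 1 - D)" by (rule pd_shifted[OF D g])
  have "objective D Shat g S = 2 * g * fidelity Shat S - trace ((g *\<^sub>R mat 1 - D) ** S)"
    by (rule objective_eq_shifted[OF D])
  also have "\<dots> \<le> g^2 * trace (matrix_inv (g *\<^sub>R mat 1 - D) ** Shat)"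
    using fidelity_le[OF Sh S A, of g] by simp
  also have "\<dots> = closed_form D Shat g"
    by (rule closed_form_eq_trace[OF D pd_invertible[OF A], symmetric])
  finally show ?thesis .
qed

definition optimal_covariance :: "real^'n^'n \<Rightarrow> real^'n^'n \<Rightarrow> real \<Rightarrow> real^'n^'n" where
  "optimal_covariance D Shat g =
     g\<^sup>2 *\<^sub>R (matrix_inv (g *\<^sub>R mat 1 - D) ** Shat ** matrix_inv (g *\<^sub>R mat 1 - D))"

text \<open>With \<open>R = Shat\<^sup>1\<^sup>/\<^sup>2\<close> and \<open>M = (\<gamma> I - D)\<^sup>-\<^sup>1\<close>, \<open>R S\<^sup>\<star> R = (\<gamma> R M R)\<^sup>2\<close>; this makes the
  fidelity term explicit and the completed square vanish.\<close>

lemma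
  fixes D Shat :: "real^'n^'n"
  assumes D: "symmetric_mat D" and Sh: "psd Shat" and g: "g > lambda_max D" "g \<ge> 0"
  shows psd_optimal_covariance: "psd (optimal_covariance D Shat g)"
    and fidelity_optimal_covariance:
      "g * fidelity Shat (optimal_covariance D Shat g) = closed_form D Shat g"
    and objective_optimal_covariance:
      "objective D Shat g (optimal_covariance D Shat g) = closed_form D Shat g"
proof -
  define A where "A = g *\<^sub>R mat 1 - D"
  define M where "M = matrix_inv A"
  define R where "R = psd_sqrt Shat"
  define S where "S = optimal_covariance D Shat g"
  have Apd: "pd A" unfolding A_def by (rule pd_shifted[OF D g(1)])
  have I: "invertible A" by (rule pd_invertible[OF Apd])
  have RS: "symmetric_mat R" and RR: "R ** R = Shat"
    using psd_psd_sqrt[OF Sh] psd_sqrt_square[OF Sh] by (auto simp: R_def psd_def)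
  have Mpsd: "psd M" unfolding M_def by (rule psd_matrix_inv_pd[OF Apd])
  have S_eq: "S = g\<^sup>2 *\<^sub>R (M ** Shat ** M)"
    by (simp add: S_def optimal_covariance_def M_def A_def)
  show "psd (optimal_covariance D Shat g)"
    unfolding S_def[symmetric] S_eq by (intro psd_scaleR psd_congruence[OF Sh] psd_symmetric[OF Mpsd]) simp
  have N: "psd (g *\<^sub>R (R ** M ** R))"
    by (intro psd_scaleR psd_congruence Mpsd RS g(2))
  have "(g *\<^sub>R (R ** M ** R)) ** (g *\<^sub>R (R ** M ** R)) = R ** S ** R"
    unfolding S_eq RR[symmetric]
    by (simp add: matrix_eq matrix_vector_mul_assoc[symmetric] scaleR_matrix_vector_assoc[symmetric]
        matrix_vector_mult_scaleR power2_eq_square)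
  then have X: "psd_sqrt (R ** S ** R) = g *\<^sub>R (R ** M ** R)"
    by (rule psd_sqrt_unique[OF N])
  have trAS: "trace (A ** S) = g^2 * trace (M ** Shat)"
  proof -
    have "trace (A ** S) = g^2 * trace (A ** (M ** Shat ** M))"
      by (simp add: S_eq matrix_scalar_ac scalar_matrix_assoc[symmetric] trace_scaleR)
    also have "trace (A ** (M ** Shat ** M)) = trace (M ** Shat ** M ** A)"
      by (rule trace_mul_sym)
    also have "M ** Shat ** M ** A = M ** Shat"
      using matrix_inv_left[OF I] by (simp add: M_def matrix_mul_assoc[symmetric])
    finally show ?thesis .
  qed
  have cf: "closed_form D Shat g = g^2 * trace (M ** Shat)"
    using closed_form_eq_trace[OF D I[unfolded A_def]] by (simp add: M_def A_def)
  show "g * fidelity Shat S = closed_form D Shat g"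
    by (simp flip: R_def add: X trace_scaleR trace_congruence[OF RR] cf power2_eq_square)
  then show "objective D Shat g S = closed_form D Shat g"
    by (simp add: objective_eq_shifted[OF D] A_def[symmetric] trAS cf power2_eq_square)
qed

lemma Jstar_eq_closed_form:
  fixes D Shat :: "real^'n^'n"
  assumes D: "symmetric_mat D" and Sh: "psd Shat" and g: "g > lambda_max D" "g \<ge> 0"
  shows "Jstar D Shat g = ereal (closed_form D Shat g)"
proof (rule antisym)
  show "Jstar D Shat g \<le> ereal (closed_form D Shat g)"
    unfolding Jstar_def using objective_le_closed_form[OF D Sh _ g(1)] by (intro SUP_least) auto
  show "ereal (closed_form D Shat g) \<le> Jstar D Shat g"
    using objective_le_Jstar[OF psd_optimal_covariance[OF assms], of D Shat g]
    by (simp add: objective_optimal_covariance[OF assms])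
qed

text \<open>The gap to the closed form is a completed square.\<close>

lemma closed_form_minus_objective:
  fixes D Shat S Z :: "real^'n^'n"
  assumes D: "symmetric_mat D" and Sh: "psd Shat" and g: "g > lambda_max D"
    and ZZ: "transpose Z ** Z = S"
    and ZR: "Z ** psd_sqrt Shat = psd_sqrt (psd_sqrt Shat ** S ** psd_sqrt Shat)"
  defines "A \<equiv> g *\<^sub>R mat 1 - D"
  defines "N \<equiv> Z - g *\<^sub>R (psd_sqrt Shat ** matrix_inv A)"
  shows "closed_form D Shat g - objective D Shat g S = trace (N ** A ** transpose N)"
proof -
  define R where "R = psd_sqrt Shat"
  define M where "M = matrix_inv A"
  have Apd: "pd A" unfolding A_def by (rule pd_shifted[OF D g])
  have IA: "invertible A" by (rule pd_invertible[OF Apd])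
  have MS: "symmetric_mat M"
    unfolding M_def by (rule symmetric_matrix_inv[OF psd_symmetric[OF pd_imp_psd[OF Apd]] IA])
  have RS: "symmetric_mat R" and RR: "R ** R = Shat"
    using psd_psd_sqrt[OF Sh] psd_sqrt_square[OF Sh] by (auto simp: R_def psd_def)
  have AM: "A *v (M *v z) = z" "M *v (A *v z) = z" for z
    unfolding M_def using matrix_inv_right_vector[OF IA] matrix_inv_left_vector[OF IA] by auto
  have tN: "transpose N = transpose Z - g *\<^sub>R (M ** R)"
    using RS MS
    by (simp add: N_def R_def M_def transpose_diff transpose_scalar matrix_transpose_mul symmetric_mat_def)
  have "N ** A ** transpose N
      = Z ** A ** transpose Z - g *\<^sub>R (Z ** R) - g *\<^sub>R (R ** transpose Z) + (g * g) *\<^sub>R (R ** M ** R)"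
    unfolding tN
    by (simp add: matrix_eq N_def R_def[symmetric] M_def[symmetric] matrix_vector_mul_assoc[symmetric]
        matrix_vector_mult_diff_rdistrib matrix_vector_mult_add_rdistrib matrix_vector_mult_diff_distrib
        scaleR_matrix_vector_assoc[symmetric] matrix_vector_mult_scaleR AM algebra_simps)
  moreover have "trace (Z ** A ** transpose Z) = trace (A ** S)"
    using trace_mult_cycle[of Z A "transpose Z"] trace_mul_sym[of S A] ZZ by (simp add: matrix_mul_assoc)
  moreover have "trace (R ** transpose Z) = trace (Z ** R)"
    using RS trace_transpose[of "Z ** R"] by (simp add: matrix_transpose_mul symmetric_mat_def)
  moreover have "closed_form D Shat g = g^2 * trace (M ** Shat)"
    using closed_form_eq_trace[OF D] IA by (simp add: A_def M_def)
  ultimately show ?thesis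
    using ZR objective_eq_shifted[OF D, of Shat g S]
    by (simp flip: R_def A_def add: trace_add trace_sub trace_scaleR trace_congruence[OF RR]
        power2_eq_square)
qed

lemma pd_psd_sqrt_invertible:
  assumes Sh: "pd (Shat::real^'n^'n)"
  shows "invertible (psd_sqrt Shat)"
proof (rule invertible_if_kernel_trivial)
  fix x assume "psd_sqrt Shat *v x = 0"
  then have "Shat *v x = 0"
    using psd_sqrt_square[OF pd_imp_psd[OF Sh]] by (metis matrix_vector_mul_assoc matrix_vector_mult_0_right)
  then show "x = 0" using Sh unfolding pd_def by force
qed

text \<open>When \<open>R = Shat\<^sup>1\<^sup>/\<^sup>2\<close> is invertible, \<open>Z = (R S R)\<^sup>1\<^sup>/\<^sup>2 R\<^sup>-\<^sup>1\<close> is the factor required above.\<close>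

lemma congruence_sqrt_factor:
  fixes Shat S :: "real^'n^'n"
  assumes Sh: "pd Shat" and S: "psd S"
  obtains Z where "transpose Z ** Z = S"
    "Z ** psd_sqrt Shat = psd_sqrt (psd_sqrt Shat ** S ** psd_sqrt Shat)"
proof
  define R where "R = psd_sqrt Shat"
  define Ri where "Ri = matrix_inv R"
  define X where "X = psd_sqrt (R ** S ** R)"
  have RS: "symmetric_mat R"
    using psd_psd_sqrt[OF pd_imp_psd[OF Sh]] by (simp add: R_def psd_def)
  have IR: "invertible R" unfolding R_def by (rule pd_psd_sqrt_invertible[OF Sh])
  have RiS: "symmetric_mat Ri" unfolding Ri_def by (rule symmetric_matrix_inv[OF RS IR])
  have RRi: "R *v (Ri *v z) = z" "Ri *v (R *v z) = z" for z
    unfolding Ri_def using matrix_inv_right_vector[OF IR] matrix_inv_left_vector[OF IR] by auto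
  have T: "psd (R ** S ** R)" by (rule psd_congruence[OF S RS])
  have XS: "symmetric_mat X" using psd_psd_sqrt[OF T] by (simp add: X_def psd_def)
  have XX: "X *v (X *v z) = R *v (S *v (R *v z))" for z
    using psd_sqrt_square[OF T] by (metis X_def matrix_vector_mul_assoc)
  have "transpose (X ** Ri) = Ri ** X"
    using XS RiS by (simp add: matrix_transpose_mul symmetric_mat_def)
  then show "transpose (X ** Ri) ** (X ** Ri) = S"
    by (simp add: matrix_eq matrix_vector_mul_assoc[symmetric] XX RRi)
  show "X ** Ri ** psd_sqrt Shat = psd_sqrt (psd_sqrt Shat ** S ** psd_sqrt Shat)"
    by (simp add: matrix_eq matrix_vector_mul_assoc[symmetric] RRi flip: R_def X_def)
qed

lemma maximizer_unique:
  fixes D Shat S :: "real^'n^'n"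
  assumes D: "symmetric_mat D" and Sh: "pd Shat" and g: "g > lambda_max D"
    and S: "psd S" and opt: "objective D Shat g S = closed_form D Shat g"
  shows "S = optimal_covariance D Shat g"
proof -
  define A where "A = g *\<^sub>R mat 1 - D"
  define M where "M = matrix_inv A"
  define R where "R = psd_sqrt Shat"
  obtain Z where ZZ: "transpose Z ** Z = S" and ZR: "Z ** R = psd_sqrt (R ** S ** R)"
    using congruence_sqrt_factor[OF Sh S] unfolding R_def by blast
  have Apd: "pd A" unfolding A_def by (rule pd_shifted[OF D g])
  have "trace ((Z - g *\<^sub>R (R ** M)) ** A ** transpose (Z - g *\<^sub>R (R ** M))) = 0"
    using closed_form_minus_objective[OF D pd_imp_psd[OF Sh] g ZZ ZR[unfolded R_def]] opt
    by (simp add: A_def M_def R_def)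
  then have "Z - g *\<^sub>R (R ** M) = 0" by (rule pd_trace_congruence_eq_0[OF Apd])
  then have Z: "Z = g *\<^sub>R (R ** M)" by simp
  have RS: "symmetric_mat R" and RR: "R ** R = Shat"
    using psd_psd_sqrt[OF pd_imp_psd[OF Sh]] psd_sqrt_square[OF pd_imp_psd[OF Sh]]
    by (auto simp: R_def psd_def)
  have MS: "symmetric_mat M"
    unfolding M_def
    using symmetric_matrix_inv[OF psd_symmetric[OF pd_imp_psd[OF Apd]] pd_invertible[OF Apd]] .
  have "S = g\<^sup>2 *\<^sub>R (M ** Shat ** M)"
    using ZZ RS MS unfolding Z RR[symmetric]
    by (simp add: transpose_scalar matrix_transpose_mul symmetric_mat_def matrix_scalar_ac
        scalar_matrix_assoc[symmetric] matrix_mul_assoc power2_eq_square)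
  then show ?thesis by (simp add: optimal_covariance_def M_def A_def)
qed

lemma Jstar_infinite_below:
  fixes D Shat :: "real^'n^'n"
  assumes D: "symmetric_mat D" and Sh: "psd Shat" and g: "g \<ge> 0" "g < lambda_max D"
  shows "Jstar D Shat g = \<infinity>"
proof (rule Jstar_eq_infinity)
  fix r :: real
  obtain B l where B: "orthonormal_basis B" and E: "\<And>v. v \<in> B \<Longrightarrow> D *v v = l v *\<^sub>R v"
    using symmetric_mat_spectral[OF D] by metis
  obtain u where u: "u \<in> B" "l u = lambda_max D"
    using lambda_max_orthonormal_eigenbasis(1)[OF D B E] by blast
  have uu: "u \<bullet> u = 1" using orthonormal_basis_inner[OF B u(1) u(1)] by simp
  define t where "t = \<bar>r\<bar> / (lambda_max D - g)"
  let ?S = "spectral_sum {u} (\<lambda>_. t)"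
  have S: "psd ?S" using g by (intro psd_rank_one) (simp add: t_def)
  have "trace (D ** ?S) - g * trace ?S = t * (lambda_max D - g)"
    using E[OF u(1)] u(2) uu trace_mult_rank_one[of "mat 1" u t]
    by (simp add: trace_mult_rank_one algebra_simps)
  also have "\<dots> = \<bar>r\<bar>" using g by (simp add: t_def)
  finally show "\<exists>S. psd S \<and> r \<le> objective D Shat g S"
    using objective_ge_linear[OF D Sh S g(1)] S by (intro exI[of _ ?S]) auto
qed

section \<open>The boundary case\<close>

lemma closed_form_eigen_expansion:
  fixes D Shat :: "real^'n^'n"
  assumes D: "symmetric_mat D" and B: "orthonormal_basis B"
    and E: "\<And>v. v \<in> B \<Longrightarrow> D *v v = l v *\<^sub>R v" and g: "g > lambda_max D"
  shows "closed_form D Shat g = (\<Sum>v\<in>B. g^2 * ((v \<bullet> (Shat *v v)) / (g - l v)))"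
proof -
  define A where "A = g *\<^sub>R mat 1 - D"
  define M where "M = matrix_inv A"
  have Apd: "pd A" unfolding A_def by (rule pd_shifted[OF D g])
  have IA: "invertible A" by (rule pd_invertible[OF Apd])
  have MS: "symmetric_mat M"
    unfolding M_def by (rule symmetric_matrix_inv[OF psd_symmetric[OF pd_imp_psd[OF Apd]] IA])
  have Mv: "M *v v = (1 / (g - l v)) *\<^sub>R v" if v: "v \<in> B" for v
  proof -
    have lv: "l v < g" using lambda_max_orthonormal_eigenbasis(2)[OF D B E v] g by simp
    have "A *v ((1 / (g - l v)) *\<^sub>R v) = v"
      using lv by (simp add: A_def shifted_mult_vector E[OF v] matrix_vector_mult_scaleR
          scaleR_diff_left[symmetric])
    then show ?thesis using matrix_inv_left_vector[OF IA] unfolding M_def by metis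
  qed
  have "trace (M ** Shat) = (\<Sum>v\<in>B. (M *v v) \<bullet> (Shat *v v))"
    by (simp add: trace_orthonormal_basis[OF B] matrix_vector_mul_assoc[symmetric]
        symmetric_mat_inner_swap[OF MS])
  also have "\<dots> = (\<Sum>v\<in>B. (v \<bullet> (Shat *v v)) / (g - l v))"
    by (intro sum.cong) (simp_all add: Mv)
  finally have "trace (M ** Shat) = (\<Sum>v\<in>B. (v \<bullet> (Shat *v v)) / (g - l v))" .
  then show ?thesis
    using closed_form_eq_trace[OF D] IA by (simp add: A_def M_def sum_distrib_left)
qed
text \<open>For fixed \<open>S\<close>, the objective is affine in \<open>\<gamma>\<close>; comparing with \<open>\<gamma>' \<down> \<gamma>\<close>, where the
  closed form bounds it, gives the upper bound.\<close>

lemma Jstar_le_Liminf: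
  fixes D Shat :: "real^'n^'n"
  assumes D: "symmetric_mat D" and Sh: "psd Shat" and g: "lambda_max D \<le> g"
  shows "Jstar D Shat g \<le> Liminf (at_right g) (\<lambda>h. ereal (closed_form D Shat h))"
  unfolding Jstar_def
proof (rule SUP_least)
  fix S :: "real^'n^'n" assume "S \<in> {S. psd S}"
  then have S: "psd S" by simp
  define c where "c = trace S - 2 * fidelity Shat S"
  define f where "f h = objective D Shat g S - (h - g) * c" for h
  have "eventually (\<lambda>h. ereal (f h) \<le> ereal (closed_form D Shat h)) (at_right g)"
    using eventually_at_right_less[of g]
  proof eventually_elim
    case (elim h)
    have "f h = objective D Shat h S"
      using objective_change_gamma[OF D, of Shat g S h] by (simp add: f_def c_def)
    also have "\<dots> \<le> closed_form D Shat h" using objective_le_closed_form[OF D Sh S] elim g by simp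
    finally show ?case by simp
  qed
  then have "Liminf (at_right g) (\<lambda>h. ereal (f h)) \<le> Liminf (at_right g) (\<lambda>h. ereal (closed_form D Shat h))"
    by (rule Liminf_mono)
  moreover have "((\<lambda>h. ereal (f h)) \<longlongrightarrow> ereal (objective D Shat g S)) (at_right g)"
    unfolding f_def by (intro tendsto_ereal tendsto_eq_intros) auto
  ultimately show "ereal (objective D Shat g S) \<le> Liminf (at_right g) (\<lambda>h. ereal (closed_form D Shat h))"
    using lim_imp_Liminf[OF trivial_limit_at_right_real] by metis
qed

text \<open>The rank-one matrices \<open>t v v\<^sup>T\<close> have objective \<open>2 \<gamma> \<surd>t |Shat\<^sup>1\<^sup>/\<^sup>2 v|\<close>, unbounded in \<open>t\<close>.\<close>

lemma Jstar_infinite_top_eigenvector: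
  fixes D Shat :: "real^'n^'n"
  assumes D: "symmetric_mat D" and Sh: "psd Shat" and v: "D *v v = g *\<^sub>R v" "v \<bullet> v = 1"
    and s: "v \<bullet> (Shat *v v) > 0" and g: "g > 0"
  shows "Jstar D Shat g = \<infinity>"
proof (rule Jstar_eq_infinity)
  fix r :: real
  define R where "R = psd_sqrt Shat"
  have RS: "symmetric_mat R" and RR: "R ** R = Shat"
    using psd_psd_sqrt[OF Sh] psd_sqrt_square[OF Sh] by (auto simp: R_def psd_def)
  define w where "w = R *v v"
  have "w \<bullet> w = v \<bullet> (Shat *v v)"
    using symmetric_mat_inner_swap[OF RS, of v "R *v v"] RR
    by (simp add: w_def matrix_vector_mul_assoc)
  then have w: "norm w > 0" using s by (simp add: norm_eq_sqrt_inner)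
  define t where "t = (\<bar>r\<bar> / (2 * g * norm w))^2"
  let ?S = "spectral_sum {v} (\<lambda>_. t)"
  have S: "psd ?S" by (rule psd_rank_one) (simp add: t_def)
  have "fidelity Shat ?S = trace (spectral_sum {w} (\<lambda>_. sqrt t / norm w))"
    using psd_sqrt_rank_one[of t w] w
    by (simp flip: R_def add: congruence_rank_one[OF RS] w_def t_def)
  also have "\<dots> = sqrt t * norm w"
    using trace_mult_rank_one[of "mat 1" w] w by (simp add: dot_square_norm power2_eq_square)
  finally have "objective D Shat g ?S = 2 * g * sqrt t * norm w"
    using v trace_mult_rank_one[of D v t] trace_mult_rank_one[of "mat 1" v t]
    by (simp add: objective_eq[OF D])
  also have "\<dots> = \<bar>r\<bar>" using g w by (simp add: t_def)
  finally show "\<exists>S. psd S \<and> r \<le> objective D Shat g S" using S by (intro exI[of _ ?S]) auto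
qed

text \<open>Evaluating the objective at \<open>\<gamma>\<close> on the maximiser for \<open>\<gamma>' > \<gamma>\<close>.\<close>

lemma closed_form_shifted_le_Jstar:
  fixes D Shat :: "real^'n^'n"
  assumes D: "symmetric_mat D" and Sh: "psd Shat" and h: "h > lambda_max D" "h > 0" "h \<ge> g"
  shows "ereal (closed_form D Shat h - 2 * (h - g) * closed_form D Shat h / h) \<le> Jstar D Shat g"
proof -
  define S where "S = optimal_covariance D Shat h"
  have hh: "h > lambda_max D" "h \<ge> 0" using h by auto
  have S: "psd S" unfolding S_def by (rule psd_optimal_covariance[OF D Sh hh])
  have "h * fidelity Shat S = closed_form D Shat h"
    unfolding S_def by (rule fidelity_optimal_covariance[OF D Sh hh])
  then have "fidelity Shat S = closed_form D Shat h / h" using h(2) by (simp add: field_simps)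
  then have "objective D Shat g S
      = closed_form D Shat h - 2 * (h - g) * closed_form D Shat h / h + (h - g) * trace S"
    using objective_change_gamma[OF D, of Shat g S h] objective_optimal_covariance[OF D Sh hh]
    by (simp add: S_def algebra_simps)
  moreover have "(h - g) * trace S \<ge> 0" using h(3) psd_trace_nonneg[OF S] by simp
  ultimately have "closed_form D Shat h - 2 * (h - g) * closed_form D Shat h / h \<le> objective D Shat g S"
    by linarith
  then have "ereal (closed_form D Shat h - 2 * (h - g) * closed_form D Shat h / h)
      \<le> ereal (objective D Shat g S)" by simp
  also have "\<dots> \<le> Jstar D Shat g" by (rule objective_le_Jstar[OF S])
  finally show ?thesis .
qed

lemma closed_form_tendsto_boundary:
  fixes D Shat :: "real^'n^'n"
  assumes D: "symmetric_mat D" and Sh: "psd Shat" and g: "g = lambda_max D"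
    and B: "orthonormal_basis B" and E: "\<And>v. v \<in> B \<Longrightarrow> D *v v = l v *\<^sub>R v"
    and no_top: "\<And>v. v \<in> B \<Longrightarrow> l v = g \<Longrightarrow> g = 0 \<or> v \<bullet> (Shat *v v) = 0"
  shows "((\<lambda>h. closed_form D Shat h) \<longlongrightarrow>
           (\<Sum>v\<in>B. if l v < g then g^2 * ((v \<bullet> (Shat *v v)) / (g - l v)) else 0)) (at_right g)"
proof -
  define s where "s v = v \<bullet> (Shat *v v)" for v
  have summand: "((\<lambda>h. h^2 * (s v / (h - l v))) \<longlongrightarrow> (if l v < g then g^2 * (s v / (g - l v)) else 0))
      (at_right g)" if v: "v \<in> B" for v
  proof (cases "l v < g")
    case True
    then show ?thesis by (simp, intro tendsto_intros) auto
  next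
    case False
    then have lg: "l v = g" using lambda_max_orthonormal_eigenbasis(2)[OF D B E v] g by simp
    have "((\<lambda>h. h * s v) \<longlongrightarrow> g * s v) (at_right g)" by (intro tendsto_intros)
    moreover have "g * s v = 0" using no_top[OF v lg] by (auto simp: s_def)
    moreover have "eventually (\<lambda>h. h * s v = h^2 * (s v / (h - l v))) (at_right g)"
      using eventually_at_right_less[of g]
      by eventually_elim (use no_top[OF v lg] in \<open>auto simp: lg s_def power2_eq_square\<close>)
    ultimately show ?thesis using False by (simp add: Lim_transform_eventually)
  qed
  have "((\<lambda>h. \<Sum>v\<in>B. h^2 * (s v / (h - l v))) \<longlongrightarrow>
      (\<Sum>v\<in>B. if l v < g then g^2 * (s v / (g - l v)) else 0)) (at_right g)"
    by (rule tendsto_sum) (rule summand)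
  moreover have "eventually (\<lambda>h. (\<Sum>v\<in>B. h^2 * (s v / (h - l v))) = closed_form D Shat h)
      (at_right g)"
    using eventually_at_right_less[of g]
    by eventually_elim (simp add: closed_form_eigen_expansion[OF D B E] g s_def)
  ultimately show ?thesis unfolding s_def by (rule Lim_transform_eventually)
qed

lemma limit_closed_form_le_Jstar:
  fixes D Shat :: "real^'n^'n"
  assumes D: "symmetric_mat D" and Sh: "psd Shat" and g: "lambda_max D \<le> g" "g > 0"
    and lim: "((\<lambda>h. closed_form D Shat h) \<longlongrightarrow> L) (at_right g)"
  shows "ereal L \<le> Jstar D Shat g"
proof -
  have "((\<lambda>h. closed_form D Shat h - 2 * (h - g) * closed_form D Shat h / h) \<longlongrightarrow>
      L - 2 * (g - g) * L / g) (at_right g)"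
    by (intro tendsto_intros lim) (use g in auto)
  then have "((\<lambda>h. ereal (closed_form D Shat h - 2 * (h - g) * closed_form D Shat h / h)) \<longlongrightarrow>
      ereal L) (at_right g)"
    by (intro tendsto_ereal) simp
  moreover have "eventually (\<lambda>h. ereal (closed_form D Shat h - 2 * (h - g) * closed_form D Shat h / h)
      \<le> Jstar D Shat g) (at_right g)"
    using eventually_at_right_less[of g]
    by eventually_elim (rule closed_form_shifted_le_Jstar[OF D Sh], use g in auto)
  ultimately show ?thesis by (rule tendsto_upperbound[OF _ _ trivial_limit_at_right_real])
qed

lemma Liminf_le_Jstar:
  fixes D Shat :: "real^'n^'n"
  assumes D: "symmetric_mat D" and Sh: "psd Shat" and g: "g = lambda_max D" "g \<ge> 0"
  shows "Liminf (at_right g) (\<lambda>h. ereal (closed_form D Shat h)) \<le> Jstar D Shat g"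
proof -
  obtain B l where B: "orthonormal_basis B" and E: "\<And>v. v \<in> B \<Longrightarrow> D *v v = l v *\<^sub>R v"
    using symmetric_mat_spectral[OF D] by metis
  show ?thesis
  proof (cases "\<exists>v\<in>B. l v = g \<and> g \<noteq> 0 \<and> v \<bullet> (Shat *v v) \<noteq> 0")
    case True
    then obtain v where v: "v \<in> B" "l v = g" "g \<noteq> 0" "v \<bullet> (Shat *v v) \<noteq> 0" by blast
    have "Jstar D Shat g = \<infinity>"
      using v E[OF v(1)] orthonormal_basis_inner[OF B v(1) v(1)] psd_quadratic_form[OF Sh, of v] g(2)
      by (intro Jstar_infinite_top_eigenvector[OF D Sh]) auto
    then show ?thesis by simp
  next
    case False
    define L where "L = (\<Sum>v\<in>B. if l v < g then g^2 * ((v \<bullet> (Shat *v v)) / (g - l v)) else 0)"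
    have lim: "((\<lambda>h. closed_form D Shat h) \<longlongrightarrow> L) (at_right g)"
      unfolding L_def using False by (intro closed_form_tendsto_boundary[OF D Sh g(1) B E]) auto
    have "Liminf (at_right g) (\<lambda>h. ereal (closed_form D Shat h)) = ereal L"
      by (rule lim_imp_Liminf[OF trivial_limit_at_right_real tendsto_ereal[OF lim]])
    also have "ereal L \<le> Jstar D Shat g"
    proof (cases "g = 0")
      case True
      have "L = 0" unfolding L_def by (rule sum.neutral) (simp add: True)
      then show ?thesis using Jstar_nonneg by (simp add: zero_ereal_def)
    next
      case False
      then show ?thesis using limit_closed_form_le_Jstar[OF D Sh _ _ lim] g by simp
    qed
    finally show ?thesis .
  qed
qed

theorem mainTheorem17:
  fixes D Shat :: "real^'n^'n" and \<gamma> :: real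
  assumes "symmetric_mat D" and "psd Shat" and "0 \<le> \<gamma>"
  shows "(\<gamma> > lambda_max D \<longrightarrow> Jstar D Shat \<gamma> = ereal (closed_form D Shat \<gamma>))
       \<and> (\<gamma> = lambda_max D \<longrightarrow>
            Jstar D Shat \<gamma> = Liminf (at_right \<gamma>) (\<lambda>g. ereal (closed_form D Shat g)))
       \<and> (\<gamma> < lambda_max D \<longrightarrow> Jstar D Shat \<gamma> = \<infinity>)
       \<and> (\<gamma> > lambda_max D \<longrightarrow>
            (let Sstar = \<gamma>\<^sup>2 *\<^sub>R (matrix_inv (\<gamma> *\<^sub>R mat 1 - D) ** Shat
                                   ** matrix_inv (\<gamma> *\<^sub>R mat 1 - D))
             in psd Sstar \<and> ereal (objective D Shat \<gamma> Sstar) = Jstar D Shat \<gamma>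
                \<and> (pd Shat \<longrightarrow>
                     (\<forall>S. psd S \<and> ereal (objective D Shat \<gamma> S) = Jstar D Shat \<gamma>
                          \<longrightarrow> S = Sstar))))"
proof (intro conjI impI)
  note D = assms(1) and Sh = assms(2) and g = assms(3)
  show "Jstar D Shat \<gamma> = Liminf (at_right \<gamma>) (\<lambda>g. ereal (closed_form D Shat g))"
    if "\<gamma> = lambda_max D"
    using Jstar_le_Liminf[OF D Sh] Liminf_le_Jstar[OF D Sh that g] that by (simp add: antisym)
  show "\<gamma> < lambda_max D \<Longrightarrow> Jstar D Shat \<gamma> = \<infinity>"
    by (rule Jstar_infinite_below[OF D Sh g])
  assume gt: "\<gamma> > lambda_max D"
  show J: "Jstar D Shat \<gamma> = ereal (closed_form D Shat \<gamma>)"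
    by (rule Jstar_eq_closed_form[OF D Sh gt g])
  show "let Sstar = \<gamma>\<^sup>2 *\<^sub>R (matrix_inv (\<gamma> *\<^sub>R mat 1 - D) ** Shat ** matrix_inv (\<gamma> *\<^sub>R mat 1 - D))
        in psd Sstar \<and> ereal (objective D Shat \<gamma> Sstar) = Jstar D Shat \<gamma>
           \<and> (pd Shat \<longrightarrow> (\<forall>S. psd S \<and> ereal (objective D Shat \<gamma> S) = Jstar D Shat \<gamma> \<longrightarrow> S = Sstar))"
    unfolding optimal_covariance_def[symmetric] Let_def J
  proof (intro conjI impI allI)
    show "psd (optimal_covariance D Shat \<gamma>)" by (rule psd_optimal_covariance[OF D Sh gt g])
    show "ereal (objective D Shat \<gamma> (optimal_covariance D Shat \<gamma>)) = ereal (closed_form D Shat \<gamma>)"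
      by (simp add: objective_optimal_covariance[OF D Sh gt g])
    fix S assume "pd Shat" and "psd S \<and> ereal (objective D Shat \<gamma> S) = ereal (closed_form D Shat \<gamma>)"
    then show "S = optimal_covariance D Shat \<gamma>" using maximizer_unique[OF D _ gt] by simp
  qed
qed

end
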